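(* Let $p$ be a prime and $g$ a generator of $U(\mathbb Z/p\mathbb Z)$. Let $\beta_1,\beta_2$ be real numbers with $\beta_1\ge\beta_2\ge 0$, and let $\varphi=\cos\frac{2\pi}{p-1}+i\sin\frac{2\pi}{p-1}$. Then there exists a nonnegative $g$-circulant matrix $A$ of order $p$ whose eigenvalues are $\beta_1,\beta_2,\beta_2\varphi,\beta_2\varphi^2,\dots,\beta_2\varphi^{p-2}$.
   Context: A $g$-circulant matrix of order $p$ is a matrix $g\text{-}circ(a_1,\dots,a_p)$ whose $(i,j)$ entry is $a_{j-(i-1)g}$ (subscripts modulo $p$ in $\{1,\dots,p\}$), i.e. each row is the preceding row cyclically shifted $g$ places to the right. *)

theory Defs
  imports "Jordan_Normal_Form.Char_Poly" "HOL-Number_Theory.Number_Theory"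
begin

text \<open>g-circulant matrix of order p, 0-based indices: entry (i,j) is
  a ((j - i*g) mod p), where a k (k < p) stands for the paper's a_(k+1).\<close>
definition g_circ :: "nat \<Rightarrow> nat \<Rightarrow> (nat \<Rightarrow> 'a) \<Rightarrow> 'a mat" where
  "g_circ p g a = mat p p (\<lambda>(i,j). a (nat ((int j - int i * int g) mod int p)))"

definition is_g_circulant :: "nat \<Rightarrow> nat \<Rightarrow> 'a mat \<Rightarrow> bool" where
  "is_g_circulant p g A \<longleftrightarrow> (\<exists>a. A = g_circ p g a)"

definition nonneg_mat :: "real mat \<Rightarrow> bool" where
  "nonneg_mat A \<longleftrightarrow> (\<forall>i<dim_row A. \<forall>j<dim_col A. A $$ (i,j) \<ge> 0)"

end

(*
  Write n = p - 1 and \<omega> = cis (2 pi / n).  Take the g-circulant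
  A = \<beta>2 P + c J, where P is the permutation matrix of l \<mapsto> l g (mod p),
  J is the all-ones matrix and c = (\<beta>1 - \<beta>2) / p \<ge> 0.  Via the discrete
  logarithm to base g the nonzero residues become Z/nZ and P becomes the cyclic
  shift, so the characters \<chi>_k (l) = \<omega>^(k dlog l), extended by \<chi>_k (0) = [k = 0],
  are eigenvectors of A: \<chi>_0 is the all-ones vector, with eigenvalue \<beta>2 + p c = \<beta>1,
  and \<chi>_k has eigenvalue \<beta>2 \<omega>^k for 0 < k < n.  The indicator e_0 of 0 satisfies
  A e_0 = \<beta>2 e_0 + c \<chi>_0, so together with the \<chi>_k it gives a basis in which A is
  upper triangular with the required diagonal.  The inverse of this basis is read
  off from the orthogonality of the characters.
*)
theory Submission
  imports Defs
begin

lemma index_mult_mat_sum: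
  assumes "A \<in> carrier_mat n m" "B \<in> carrier_mat m k" "i < n" "j < k"
  shows "(A * B) $$ (i, j) = (\<Sum>l<m. A $$ (i, l) * B $$ (l, j))"
  using assms by (simp add: scalar_prod_def atLeast0LessThan)

lemma char_poly_eq_diag_prod_if_triangularizes:
  fixes A S T U :: "'a :: field mat"
  assumes A: "A \<in> carrier_mat n n" and S: "S \<in> carrier_mat n n" and T: "T \<in> carrier_mat n n"
    and U: "U \<in> carrier_mat n n" "upper_triangular U"
    and left_inverse: "T * S = 1\<^sub>m n" and triangularizes: "A * S = S * U"
  shows "char_poly A = (\<Prod>i<n. [:- U $$ (i, i), 1:])"
proof -
  have right_inverse: "S * T = 1\<^sub>m n"
    using mat_mult_left_right_inverse[OF T S left_inverse] .
  have "A = A * (S * T)" using A by (simp add: right_inverse)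
  also have "\<dots> = S * U * T"
    using A S T by (simp flip: assoc_mult_mat[of A n n S n T n] add: triangularizes)
  finally have "similar_mat A U"
    using A S T U(1) right_inverse left_inverse by (intro similar_matI[of A U S T n]) auto
  then have "char_poly A = char_poly U" by (rule char_poly_similar)
  also have "\<dots> = (\<Prod>a \<leftarrow> diag_mat U. [:- a, 1:])"
    using char_poly_upper_triangular[OF U] .
  also have "\<dots> = (\<Prod>i<n. [:- U $$ (i, i), 1:])"
    using U(1) by (simp add: diag_mat_def prod.distinct_set_conv_list[symmetric] atLeast_upt)
  finally show ?thesis .
qed

lemma power_mod_eq_if_power_eq_1:
  fixes z :: "'a :: monoid_mult"
  assumes "z ^ n = 1"
  shows "z ^ (m mod n) = z ^ m"
proof -
  have "z ^ m = (z ^ n) ^ (m div n) * z ^ (m mod n)"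
    by (simp flip: power_mult power_add)
  then show ?thesis using assms by simp
qed

lemma sum_powers_root_unity:
  fixes z :: "'a :: field"
  assumes "z ^ n = 1"
  shows "(\<Sum>m<n. z ^ m) = (if z = 1 then of_nat n else 0)"
  using assms by (simp add: geometric_sum)

lemma cis_2pi_div_power_eq_1: "0 < n \<Longrightarrow> cis (2 * pi / real n) ^ n = 1"
  by (simp add: DeMoivre)

lemma cis_2pi_div_power_eq_iff:
  assumes "i < n" "j < n"
  shows "cis (2 * pi / real n) ^ i = cis (2 * pi / real n) ^ j \<longleftrightarrow> i = j"
proof -
  have "inj_on (\<lambda>k. cis (2 * pi * real k / real n)) {..<n}"
    using bij_betw_roots_unity[of n] assms by (simp add: bij_betw_def)
  then show ?thesis
    using assms by (auto simp: DeMoivre mult_ac dest: inj_onD)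
qed

lemma sum_powers_cis_quotient:
  assumes "i < n" "j < n"
  shows "(\<Sum>m<n. (cis (2 * pi / real n) ^ j / cis (2 * pi / real n) ^ i) ^ m)
    = (if i = j then of_nat n else 0)"
proof -
  let ?\<omega> = "cis (2 * pi / real n)"
  have "(?\<omega> ^ j / ?\<omega> ^ i) ^ n = (?\<omega> ^ n) ^ j / (?\<omega> ^ n) ^ i"
    by (simp add: power_divide flip: power_mult) (simp add: mult.commute)
  also have "\<dots> = 1" using assms by (simp add: cis_2pi_div_power_eq_1)
  finally have "(\<Sum>m<n. (?\<omega> ^ j / ?\<omega> ^ i) ^ m) = (if ?\<omega> ^ j / ?\<omega> ^ i = 1 then of_nat n else 0)"
    by (rule sum_powers_root_unity)
  also have "?\<omega> ^ j / ?\<omega> ^ i = 1 \<longleftrightarrow> i = j"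
    using cis_2pi_div_power_eq_iff[OF assms] by auto
  finally show ?thesis .
qed

lemma g_circ_carrier [simp]: "g_circ p g a \<in> carrier_mat p p"
  by (simp add: g_circ_def)

lemma map_mat_g_circ: "map_mat f (g_circ p g a) = g_circ p g (f \<circ> a)"
  by (auto simp: g_circ_def)

lemma nonneg_mat_g_circ: "(\<And>k. a k \<ge> 0) \<Longrightarrow> nonneg_mat (g_circ p g a)"
  by (simp add: nonneg_mat_def g_circ_def)

lemma g_circ_index_eq_0_iff:
  fixes i l g p :: nat
  assumes "l < p"
  shows "nat ((int l - int i * int g) mod int p) = 0 \<longleftrightarrow> l = i * g mod p"
proof -
  have "nat ((int l - int i * int g) mod int p) = 0 \<longleftrightarrow> [int l = int (i * g)] (mod int p)"
    using assms by (simp add: cong_iff_dvd_diff mod_eq_0_iff_dvd nat_eq_iff)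
  also have "\<dots> \<longleftrightarrow> l = i * g mod p"
    using assms by (simp add: cong_def flip: of_nat_mult of_nat_mod)
  finally show ?thesis .
qed

lemma g_circ_delta_plus_const_entry:
  assumes "i < p" "l < p"
  shows "g_circ p g (\<lambda>k. (if k = 0 then \<beta> else 0) + \<gamma>) $$ (i, l)
    = (if l = i * g mod p then \<beta> else 0) + \<gamma>"
  using assms g_circ_index_eq_0_iff[OF assms(2), of i g] by (simp add: g_circ_def)

lemma g_circ_delta_plus_const_mult:
  fixes \<beta> \<gamma> :: "'a :: comm_semiring_1"
  assumes "i < p"
  shows "(\<Sum>l<p. g_circ p g (\<lambda>k. (if k = 0 then \<beta> else 0) + \<gamma>) $$ (i, l) * f l)
    = \<beta> * f (i * g mod p) + \<gamma> * (\<Sum>l<p. f l)"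
proof -
  have "(\<Sum>l<p. g_circ p g (\<lambda>k. (if k = 0 then \<beta> else 0) + \<gamma>) $$ (i, l) * f l)
      = (\<Sum>l<p. (if l = i * g mod p then \<beta> * f l else 0) + \<gamma> * f l)"
    using assms by (intro sum.cong refl) (simp add: g_circ_delta_plus_const_entry distrib_right)
  also have "\<dots> = \<beta> * f (i * g mod p) + \<gamma> * (\<Sum>l<p. f l)"
    using assms by (simp add: sum.distrib sum_distrib_left)
  finally show ?thesis .
qed

lemma residue_primroot_prime_iff:
  assumes "prime p"
  shows "residue_primroot p g \<longleftrightarrow> ord p g = p - 1"
proof -
  have "coprime p g" if "ord p g = p - 1"
    using that prime_gt_1_nat[OF assms] ord_gt_0_iff[of p g] by simp
  moreover have "0 < p" using prime_gt_0_nat[OF assms] .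
  ultimately show ?thesis
    using assms by (auto simp: residue_primroot_def totient_prime)
qed

locale prime_primroot =
  fixes p g :: nat
  assumes prime: "prime p" and primroot: "residue_primroot p g"
begin

lemma p_gt_1: "1 < p"
  using prime by (rule prime_gt_1_nat)

lemma bij_betw_power_mod: "bij_betw (\<lambda>m. g ^ m mod p) {..<p - 1} {0<..<p}"
  using residue_primroot_is_generator[OF p_gt_1 primroot] prime
  by (simp add: totient_prime totatives_prime)

lemma power_mod_mod_order: "g ^ (m mod (p - 1)) mod p = g ^ m mod p"
proof -
  have "[g ^ (p - 1) = 1] (mod p)"
    using ord[of g p] primroot by (simp add: residue_primroot_prime_iff[OF prime])
  then have "[(g ^ (p - 1)) ^ (m div (p - 1)) * g ^ (m mod (p - 1)) = g ^ (m mod (p - 1))] (mod p)"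
    using cong_mult[OF cong_pow cong_refl] by fastforce
  then show ?thesis
    by (simp add: cong_def flip: power_mult power_add)
qed

definition dlog :: "nat \<Rightarrow> nat" where
  "dlog l = inv_into {..<p - 1} (\<lambda>m. g ^ m mod p) l"

lemma dlog_power_mod: "dlog (g ^ m mod p) = m mod (p - 1)"
proof -
  have "dlog (g ^ (m mod (p - 1)) mod p) = m mod (p - 1)"
    unfolding dlog_def using bij_betw_power_mod p_gt_1
    by (intro inv_into_f_f) (auto simp: bij_betw_def)
  then show ?thesis by (simp only: power_mod_mod_order)
qed

lemma power_dlog_mod: "0 < l \<Longrightarrow> l < p \<Longrightarrow> g ^ dlog l mod p = l"
  unfolding dlog_def using bij_betw_power_mod
  by (intro f_inv_into_f) (auto simp: bij_betw_def)

lemma mult_generator_mod: "0 < l \<Longrightarrow> l < p \<Longrightarrow> l * g mod p = g ^ Suc (dlog l) mod p"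
  using power_dlog_mod by (metis mod_mult_left_eq power_Suc2)

lemma mult_generator_mod_eq_0_iff: "l * g mod p = 0 \<longleftrightarrow> p dvd l"
proof -
  have "coprime p g"
    using primroot by (simp add: residue_primroot_def)
  then have "\<not> p dvd g"
    using prime by (metis coprime_absorb_left not_prime_unit)
  then show ?thesis
    using prime by (simp add: prime_dvd_mult_iff flip: dvd_eq_mod_eq_0)
qed

lemma sum_lessThan_split_power_mod:
  "(\<Sum>l<p. f l) = f 0 + (\<Sum>m<p - 1. f (g ^ m mod p))"
proof -
  have "{..<p} = insert 0 {0<..<p}" using p_gt_1 by auto
  then have "(\<Sum>l<p. f l) = f 0 + (\<Sum>l\<in>{0<..<p}. f l)" by simp
  also have "(\<Sum>l\<in>{0<..<p}. f l) = (\<Sum>m<p - 1. f (g ^ m mod p))"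
    by (rule sum.reindex_bij_betw[OF bij_betw_power_mod, symmetric])
  finally show ?thesis .
qed

lemma power_mod_pos: "0 < g ^ m mod p"
  using bij_betw_power_mod p_gt_1 power_mod_mod_order[of m]
  by (metis bij_betwE greaterThanLessThan_iff lessThan_iff mod_less_divisor zero_less_diff)

definition \<omega> :: complex where
  "\<omega> = cis (2 * pi / real (p - 1))"

lemma \<omega>_power_order: "\<omega> ^ (p - 1) = 1"
  unfolding \<omega>_def using p_gt_1 by (intro cis_2pi_div_power_eq_1) simp

definition eigvec :: "nat \<Rightarrow> nat \<Rightarrow> complex" where
  "eigvec k l = (if l = 0 then of_bool (k = 0) else \<omega> ^ (k * dlog l))"

definition eigvec_dual :: "nat \<Rightarrow> nat \<Rightarrow> complex" where
  "eigvec_dual k l = (if l = 0 then 0 else inverse (eigvec k l) / of_nat (p - 1))"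

lemma eigvec_0 [simp]: "eigvec 0 l = 1"
  by (simp add: eigvec_def)

lemma eigvec_at_0 [simp]: "eigvec k 0 = of_bool (k = 0)"
  by (simp add: eigvec_def)

lemma eigvec_dual_at_0 [simp]: "eigvec_dual k 0 = 0"
  by (simp add: eigvec_dual_def)

lemma eigvec_power_mod: "eigvec k (g ^ m mod p) = \<omega> ^ (k * m)"
proof -
  have "(\<omega> ^ k) ^ (p - 1) = 1"
    by (metis \<omega>_power_order mult.commute power_mult power_one)
  then have "(\<omega> ^ k) ^ (m mod (p - 1)) = (\<omega> ^ k) ^ m"
    by (rule power_mod_eq_if_power_eq_1)
  then show ?thesis
    using power_mod_pos[of m] by (simp add: eigvec_def dlog_power_mod flip: power_mult)
qed

lemma eigvec_mult_generator:
  assumes "i < p"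
  shows "eigvec k (i * g mod p) = \<omega> ^ k * eigvec k i"
proof (cases "i = 0")
  case False
  then have "eigvec k (i * g mod p) = \<omega> ^ (k * Suc (dlog i))"
    using assms by (simp only: mult_generator_mod eigvec_power_mod)
  also have "\<dots> = \<omega> ^ k * eigvec k i"
    using False by (simp add: eigvec_def power_add)
  finally show ?thesis .
qed (cases "k = 0"; simp)

lemma sum_eigvec:
  assumes "k < p - 1"
  shows "(\<Sum>l<p. eigvec k l) = (if k = 0 then of_nat p else 0)"
proof -
  have "(\<Sum>l<p. eigvec k l) = of_bool (k = 0) + (\<Sum>m<p - 1. (\<omega> ^ k / \<omega> ^ 0) ^ m)"
    by (simp add: sum_lessThan_split_power_mod eigvec_power_mod power_mult)
  also have "\<dots> = of_bool (k = 0) + (if 0 = k then of_nat (p - 1) else 0)"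
    using assms unfolding \<omega>_def by (subst sum_powers_cis_quotient) auto
  also have "\<dots> = (if k = 0 then of_nat p else 0)"
    using p_gt_1 by (simp add: of_nat_diff)
  finally show ?thesis .
qed

lemma sum_eigvec_dual_mult_eigvec:
  assumes "i < p - 1" "j < p - 1"
  shows "(\<Sum>l<p. eigvec_dual i l * eigvec j l) = of_bool (i = j)"
proof -
  have "eigvec_dual i (g ^ m mod p) * eigvec j (g ^ m mod p) = (\<omega> ^ j / \<omega> ^ i) ^ m / of_nat (p - 1)" for m
    using power_mod_pos[of m]
    by (simp add: eigvec_dual_def eigvec_power_mod field_simps flip: power_mult)
  then have "(\<Sum>l<p. eigvec_dual i l * eigvec j l) = (\<Sum>m<p - 1. (\<omega> ^ j / \<omega> ^ i) ^ m) / of_nat (p - 1)"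
    by (simp add: sum_lessThan_split_power_mod eigvec_dual_def sum_divide_distrib)
  also have "\<dots> = of_bool (i = j)"
    using assms p_gt_1 unfolding \<omega>_def by (subst sum_powers_cis_quotient) auto
  finally show ?thesis .
qed

(* Columns: eigvec 0 (at j = 0, since 0 - 1 = 0 in nat), the indicator of 0, and
   eigvec 1, ..., eigvec (p - 2).  The same shift j - 1 is used in eigval below. *)
definition eigbasis :: "complex mat" where
  "eigbasis = mat p p (\<lambda>(l, j). if j = 1 then of_bool (l = 0) else eigvec (j - 1) l)"

definition eigbasis_inv :: "complex mat" where
  "eigbasis_inv = mat p p (\<lambda>(i, l). if i = 1 then of_bool (l = 0) - eigvec_dual 0 l else eigvec_dual (i - 1) l)"

lemma eigbasis_carrier: "eigbasis \<in> carrier_mat p p"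
  by (simp add: eigbasis_def)

lemma eigbasis_inv_carrier: "eigbasis_inv \<in> carrier_mat p p"
  by (simp add: eigbasis_inv_def)

lemma eigbasis_inv_mult_eigbasis: "eigbasis_inv * eigbasis = 1\<^sub>m p"
proof (rule eq_matI)
  fix i j assume "i < dim_row (1\<^sub>m p :: complex mat)" "j < dim_col (1\<^sub>m p :: complex mat)"
  then have i: "i < p" and j: "j < p" by auto
  have entry: "(eigbasis_inv * eigbasis) $$ (i, j) = (\<Sum>l<p. eigbasis_inv $$ (i, l) * eigbasis $$ (l, j))"
    using eigbasis_inv_carrier eigbasis_carrier i j by (rule index_mult_mat_sum)
  have dual_at_0: "eigvec_dual k 0 = 0" for k
    by (simp add: eigvec_dual_def)
  consider "i \<noteq> 1" "j \<noteq> 1" | "i \<noteq> 1" "j = 1" | "i = 1" "j \<noteq> 1" | "i = 1" "j = 1"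
    by blast
  then show "(eigbasis_inv * eigbasis) $$ (i, j) = 1\<^sub>m p $$ (i, j)"
  proof cases
    case 1
    have "i - 1 < p - 1" "j - 1 < p - 1"
      using i j p_gt_1 by auto
    moreover have "i - 1 = j - 1 \<longleftrightarrow> i = j"
      using 1 by linarith
    ultimately have "(\<Sum>l<p. eigvec_dual (i - 1) l * eigvec (j - 1) l) = of_bool (i = j)"
      by (simp add: sum_eigvec_dual_mult_eigvec)
    then show ?thesis
      using 1 i j unfolding entry by (simp add: eigbasis_inv_def eigbasis_def)
  next
    case 2
    then show ?thesis
      using i j unfolding entry by (simp add: eigbasis_inv_def eigbasis_def dual_at_0)
  next
    case 3
    then have "(\<Sum>l<p. (of_bool (l = 0) - eigvec_dual 0 l) * eigvec (j - 1) l) = 0"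
      using i j p_gt_1 by (simp add: left_diff_distrib sum_subtractf sum_eigvec_dual_mult_eigvec)
    then show ?thesis
      using 3 i j unfolding entry by (simp add: eigbasis_inv_def eigbasis_def)
  next
    case 4
    then show ?thesis
      using i j unfolding entry by (simp add: eigbasis_inv_def eigbasis_def dual_at_0)
  qed
qed (simp_all add: eigbasis_def eigbasis_inv_def)

context
  fixes \<beta> \<gamma> :: complex
begin

abbreviation circ_matrix :: "complex mat" where
  "circ_matrix \<equiv> g_circ p g (\<lambda>k. (if k = 0 then \<beta> else 0) + \<gamma>)"

lemma g_circ_mult_eigvec:
  assumes "i < p" "k < p - 1"
  shows "(\<Sum>l<p. circ_matrix $$ (i, l) * eigvec k l)
    = (\<beta> * \<omega> ^ k + (if k = 0 then of_nat p * \<gamma> else 0)) * eigvec k i"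
  unfolding g_circ_delta_plus_const_mult[OF assms(1)] eigvec_mult_generator[OF assms(1)]
  using assms by (simp add: sum_eigvec algebra_simps)

lemma g_circ_mult_indicator_0:
  assumes "i < p"
  shows "(\<Sum>l<p. circ_matrix $$ (i, l) * of_bool (l = 0)) = \<beta> * of_bool (i = 0) + \<gamma>"
  unfolding g_circ_delta_plus_const_mult[OF assms]
  using assms p_gt_1 mult_generator_mod_eq_0_iff[of i] by (auto dest: dvd_imp_le)

definition eigval :: "nat \<Rightarrow> complex" where
  "eigval j = \<beta> * \<omega> ^ (j - 1) + (if j = 0 then of_nat p * \<gamma> else 0)"

definition triangular_form :: "complex mat" where
  "triangular_form = mat p p (\<lambda>(l, j).
     (if l = j then eigval j else 0) + (if l = 0 \<and> j = 1 then \<gamma> else 0))"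

lemma triangular_form_carrier: "triangular_form \<in> carrier_mat p p"
  by (simp add: triangular_form_def)

lemma upper_triangular_triangular_form: "upper_triangular triangular_form"
  by (rule upper_triangularI) (simp add: triangular_form_def)

lemma g_circ_mult_eigbasis: "circ_matrix * eigbasis = eigbasis * triangular_form"
proof (rule eq_matI)
  fix i j assume "i < dim_row (eigbasis * triangular_form)" "j < dim_col (eigbasis * triangular_form)"
  then have i: "i < p" and j: "j < p"
    by (simp_all add: eigbasis_def triangular_form_def)
  have "(circ_matrix * eigbasis) $$ (i, j) = (\<Sum>l<p. circ_matrix $$ (i, l) * eigbasis $$ (l, j))"
    using g_circ_carrier eigbasis_carrier i j by (rule index_mult_mat_sum)
  also have "\<dots> = eigbasis $$ (i, j) * eigval j + (if j = 1 then \<gamma> * eigbasis $$ (i, 0) else 0)"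
    using i j p_gt_1 g_circ_mult_indicator_0[OF i] g_circ_mult_eigvec[OF i, of "j - 1"]
    by (auto simp: eigbasis_def eigval_def)
  also have "\<dots> = (\<Sum>l<p. (if l = j then eigbasis $$ (i, j) * eigval j else 0)
      + (if l = 0 then (if j = 1 then \<gamma> * eigbasis $$ (i, 0) else 0) else 0))"
    using j p_gt_1 by (simp add: sum.distrib)
  also have "\<dots> = (\<Sum>l<p. eigbasis $$ (i, l) * triangular_form $$ (l, j))"
    using j by (intro sum.cong) (auto simp: triangular_form_def)
  also have "\<dots> = (eigbasis * triangular_form) $$ (i, j)"
    using eigbasis_carrier triangular_form_carrier i j by (rule index_mult_mat_sum[symmetric])
  finally show "(circ_matrix * eigbasis) $$ (i, j) = (eigbasis * triangular_form) $$ (i, j)" .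
qed (simp_all add: g_circ_def eigbasis_def triangular_form_def)

lemma char_poly_g_circ_delta_plus_const:
  "char_poly circ_matrix = [:- (\<beta> + of_nat p * \<gamma>), 1:] * (\<Prod>k<p - 1. [:- (\<beta> * \<omega> ^ k), 1:])"
proof -
  have "char_poly circ_matrix = (\<Prod>j<p. [:- triangular_form $$ (j, j), 1:])"
    by (rule char_poly_eq_diag_prod_if_triangularizes[OF g_circ_carrier eigbasis_carrier
          eigbasis_inv_carrier triangular_form_carrier upper_triangular_triangular_form
          eigbasis_inv_mult_eigbasis g_circ_mult_eigbasis])
  also have "\<dots> = (\<Prod>j<Suc (p - 1). [:- eigval j, 1:])"
    using p_gt_1 by (intro prod.cong) (auto simp: triangular_form_def)
  also have "\<dots> = [:- eigval 0, 1:] * (\<Prod>k<p - 1. [:- eigval (Suc k), 1:])"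
    by (rule prod.lessThan_Suc_shift)
  finally show ?thesis
    by (simp add: eigval_def)
qed

end

end

theorem mainTheorem10:
  fixes p g :: nat and \<beta>1 \<beta>2 :: real
  assumes "prime p" and "ord p g = p - 1"
    and "\<beta>1 \<ge> \<beta>2" and "\<beta>2 \<ge> 0"
  defines "\<phi> \<equiv> cis (2 * pi / real (p - 1))"
  shows "\<exists>A \<in> carrier_mat p p. is_g_circulant p g A \<and> nonneg_mat A \<and>
    char_poly (map_mat complex_of_real A) =
      [:- complex_of_real \<beta>1, 1:] * (\<Prod>k<p - 1. [:- (complex_of_real \<beta>2 * \<phi> ^ k), 1:])"
proof -
  interpret prime_primroot p g
    using assms(1,2) by unfold_locales (simp_all add: residue_primroot_prime_iff)
  define \<gamma> where "\<gamma> = (\<beta>1 - \<beta>2) / real p"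
  define a where "a = (\<lambda>k::nat. (if k = 0 then \<beta>2 else 0) + \<gamma>)"
  have "\<gamma> \<ge> 0"
    using assms(3) by (simp add: \<gamma>_def)
  then have nonneg: "nonneg_mat (g_circ p g a)"
    using assms(4) by (intro nonneg_mat_g_circ) (simp add: a_def)
  have circulant: "is_g_circulant p g (g_circ p g a)"
    unfolding is_g_circulant_def by blast
  have "\<beta>2 + real p * \<gamma> = \<beta>1"
    using p_gt_1 by (simp add: \<gamma>_def)
  then have eigval_0: "complex_of_real \<beta>2 + of_nat p * complex_of_real \<gamma> = complex_of_real \<beta>1"
    by (metis of_real_add of_real_mult of_real_of_nat_eq)
  have "map_mat complex_of_real (g_circ p g a)
      = g_circ p g (\<lambda>k. (if k = 0 then complex_of_real \<beta>2 else 0) + complex_of_real \<gamma>)"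
    unfolding map_mat_g_circ a_def comp_def by (rule arg_cong[where f = "g_circ p g"]) auto
  then have "char_poly (map_mat complex_of_real (g_circ p g a)) =
      [:- complex_of_real \<beta>1, 1:] * (\<Prod>k<p - 1. [:- (complex_of_real \<beta>2 * \<phi> ^ k), 1:])"
    unfolding \<phi>_def by (simp only: char_poly_g_circ_delta_plus_const eigval_0 \<omega>_def)
  then show ?thesis
    using g_circ_carrier circulant nonneg by blast
qed

end
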